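(* Let $n\ge 2$, $p=n(n+1)$, let $\beta$ be as below, and define $$a(x)=\frac{p}{2}\Big(\big(\tfrac{1+x}{2}\big)^{p-1}+\beta(x)\big(\tfrac{1-x}{2}\big)^{p-1}\Big)\frac{1}{L_n'(x)},\qquad x\in[z_p,1).$$ Then $a$ is strictly decreasing on $[z_p,1)$ (and $a(x)L_n$ is tangent to $h_{\beta(x)^{1/p}}$ at $x$, with $a(x)\to1$ as $x\to1$).
   Context: $L_n(s)=\frac{1}{2^nn!}\frac{d^n}{ds^n}(s^2-1)^n$; $z_p$ is the largest zero of $L_n$ in $(-1,1)$; $\beta(x)=\frac{(1+x)^pL_n'(x)-p(1+x)^{p-1}L_n(x)}{(1-x)^pL_n'(x)+p(1-x)^{p-1}L_n(x)}$; $h_c(s)=\big(\frac{1+s}{2}\big)^p-c^p\big(\frac{1-s}{2}\big)^p$. *)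

theory Defs
  imports "HOL-Analysis.Analysis" "HOL-Computational_Algebra.Polynomial"
begin

text \<open>Legendre polynomial via Rodrigues' formula:
  L_n(s) = 1/(2^n n!) (d/ds)^n (s^2-1)^n.\<close>
definition legendre :: "nat \<Rightarrow> real poly" where
  "legendre n = smult (1 / (2 ^ n * fact n)) ((pderiv ^^ n) ([:-1, 0, 1:] ^ n))"

definition L :: "nat \<Rightarrow> real \<Rightarrow> real" where
  "L n s = poly (legendre n) s"

definition Ld :: "nat \<Rightarrow> real \<Rightarrow> real" where
  "Ld n s = poly (pderiv (legendre n)) s"

definition beta :: "nat \<Rightarrow> nat \<Rightarrow> real \<Rightarrow> real" where
  "beta p n x =
     ((1 + x) ^ p * Ld n x - real p * (1 + x) ^ (p - 1) * L n x) /
     ((1 - x) ^ p * Ld n x + real p * (1 - x) ^ (p - 1) * L n x)"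

definition hc :: "nat \<Rightarrow> real \<Rightarrow> real \<Rightarrow> real" where
  "hc p c s = ((1 + s) / 2) ^ p - c ^ p * ((1 - s) / 2) ^ p"

definition acoef :: "nat \<Rightarrow> nat \<Rightarrow> real \<Rightarrow> real" where
  "acoef p n x = real p / 2 *
     (((1 + x) / 2) ^ (p - 1) + beta p n x * ((1 - x) / 2) ^ (p - 1)) / Ld n x"

end

theory Submission
  imports Defs
begin

text \<open>
  Write \<open>p = n(n+1)\<close>, \<open>h = (1+x)/2\<close> and \<open>D(x) = (1-x) L\<^sub>n'(x) + p L\<^sub>n(x)\<close>.
  A direct computation turns the definition of \<open>a\<close> into the closed form
  \<open>a(x) = p h\<^sup>p\<^sup>-\<^sup>1 / D(x)\<close>, and the same algebra shows that \<open>a(x) L\<^sub>n\<close> touches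
  \<open>h\<^sub>c\<close>, \<open>c = \<beta>(x)\<^sup>1\<^sup>/\<^sup>p\<close>, at \<open>x\<close>.  Differentiating the closed form and using Legendre's
  equation \<open>(x\<^sup>2-1) L\<^sub>n'' + 2x L\<^sub>n' = p L\<^sub>n\<close> gives \<open>a' = -p\<^sup>2 h\<^sup>p\<^sup>-\<^sup>2 (1-x\<^sup>2) L\<^sub>n''/(2 D\<^sup>2)\<close>,
  so \<open>a\<close> decreases wherever \<open>L\<^sub>n'' > 0\<close>; continuity at \<open>1\<close> and \<open>L\<^sub>n(1) = 1\<close> give the limit.

  Applied to the derivatives of
  \<open>(x\<^sup>2-1)\<^sup>n\<close> (Rodrigues' formula) this shows that \<open>L\<^sub>n\<close> has \<open>n\<close> simple zeros in \<open>(-1,1)\<close>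
  and that \<open>L\<^sub>n > 0\<close>, \<open>L\<^sub>n' > 0\<close>, \<open>L\<^sub>n'' > 0\<close> to the right of the largest one.  The sign of
  \<open>\<beta>\<close> follows from \<open>((1-x)((1+x) L\<^sub>n' - p L\<^sub>n))' = -p (1-x) L\<^sub>n'\<close>.
\<close>

text \<open>Rolle's theorem for a finite set of zeros: the derivative of \<open>p\<close> has one zero less,
  all strictly between the smallest and the largest given zero.\<close>

lemma poly_zeros_between:
  fixes p :: "real poly" and S :: "real set"
  assumes "finite S" "S \<noteq> {}" "\<And>x. x \<in> S \<Longrightarrow> poly p x = 0"
  shows "\<exists>S'. finite S' \<and> card S' = card S - 1 \<and> S' \<subseteq> {Min S<..<Max S}
               \<and> (\<forall>x\<in>S'. poly (pderiv p) x = 0)"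
  using assms
proof (induction S rule: finite_linorder_max_induct)
  case empty
  then show ?case by simp
next
  case (insert b A)
  show ?case
  proof (cases "A = {}")
    case True
    then show ?thesis by (intro exI[of _ "{}"]) simp
  next
    case False
    obtain S' where S': "finite S'" "card S' = card A - 1" "S' \<subseteq> {Min A<..<Max A}"
        "\<forall>x\<in>S'. poly (pderiv p) x = 0"
      using insert.IH False insert.prems by auto
    have "Max A < b" using insert.hyps False by simp
    then obtain \<xi> where \<xi>: "Max A < \<xi>" "\<xi> < b" "poly p b - poly p (Max A) = (b - Max A) * poly (pderiv p) \<xi>"
      using poly_MVT by blast
    have "poly p b = 0" "poly p (Max A) = 0"
      using insert.prems False insert.hyps(1) by auto
    then have "poly (pderiv p) \<xi> = 0" using \<xi> \<open>Max A < b\<close> by simp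
    moreover have "\<xi> \<notin> S'" using S'(3) \<xi>(1) by auto
    moreover have "Min A < b" using insert.hyps False by simp
    then have "Min (insert b A) = Min A" "Max (insert b A) = b"
      using insert.hyps(1) False \<open>Max A < b\<close> by (simp_all add: min_absorb2 max_absorb1)
    moreover have "insert \<xi> S' \<subseteq> {Min A<..<b}"
    proof -
      have "Min A < \<xi>" using \<xi>(1) insert.hyps(1) False by auto
      then show ?thesis using S'(3) \<xi>(2) \<open>Max A < b\<close> by (auto simp del: Min_less_iff)
    qed
    ultimately show ?thesis using S' \<xi> False insert.hyps
      by (intro exI[of _ "insert \<xi> S'"]) (auto simp: card_insert_if card_gt_0_iff simp del: Min_less_iff)
  qed
qed

lemma poly_zeros_eq_of_card:
  fixes q :: "'a :: idom poly"
  assumes "q \<noteq> 0" "finite S" "\<And>x. x \<in> S \<Longrightarrow> poly q x = 0" "degree q \<le> card S"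
  shows "{x. poly q x = 0} = S"
proof -
  have fin: "finite {x. poly q x = 0}" by (rule poly_roots_finite[OF assms(1)])
  have sub: "S \<subseteq> {x. poly q x = 0}" using assms(3) by auto
  have "card {x. poly q x = 0} \<le> card S"
    using card_poly_roots_bound[OF assms(1)] assms(4) by linarith
  then have "card S = card {x. poly q x = 0}" using card_mono[OF fin sub] by simp
  then show ?thesis using card_subset_eq[OF fin sub] by simp
qed

lemma pderiv_zeros_below:
  fixes q :: "real poly"
  assumes card: "card {x. poly q x = 0} = degree q" and deg: "degree q \<ge> 1"
    and bound: "\<And>x. poly q x = 0 \<Longrightarrow> x \<le> b"
  shows "card {x. poly (pderiv q) x = 0} = degree (pderiv q)"
    and "\<And>x. poly (pderiv q) x = 0 \<Longrightarrow> x < b"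
proof -
  define R where "R = {x. poly q x = 0}"
  have fin: "finite R" and ne: "R \<noteq> {}"
    using card deg card_gt_0_iff[of R] unfolding R_def by auto
  obtain S where S: "finite S" "card S = card R - 1" "S \<subseteq> {Min R<..<Max R}"
      "\<forall>x\<in>S. poly (pderiv q) x = 0"
    using poly_zeros_between[OF fin ne, of q] unfolding R_def by auto
  have "pderiv q \<noteq> 0" using deg by (simp add: pderiv_eq_0_iff)
  then have R': "{x. poly (pderiv q) x = 0} = S"
    using S card by (intro poly_zeros_eq_of_card) (auto simp: degree_pderiv R_def)
  then show "card {x. poly (pderiv q) x = 0} = degree (pderiv q)"
    using S(2) card by (simp add: degree_pderiv R_def)
  have "Max R \<le> b" using fin ne bound by (simp add: R_def)
  then show "x < b" if "poly (pderiv q) x = 0" for x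
    using that R' S(3) by auto
qed

lemma poly_pos_right_of_zeros:
  fixes q :: "real poly"
  assumes "lead_coeff q > 0" "\<And>y. y \<ge> x \<Longrightarrow> poly q y \<noteq> 0"
  shows "poly q x > 0"
proof (rule ccontr)
  assume "\<not> poly q x > 0"
  then have neg: "poly q x < 0" using assms(2)[of x] by linarith
  obtain N where N: "\<forall>y\<ge>N. poly q y \<ge> lead_coeff q"
    using poly_pinfty_gt_lc[OF assms(1)] by blast
  have "poly q (max N (x + 1)) > 0" using N[rule_format, of "max N (x + 1)"] assms(1) by simp
  moreover have "x < max N (x + 1)" by simp
  ultimately obtain r where "x < r" "poly q r = 0"
    using poly_IVT_pos[of x "max N (x + 1)" q] neg by blast
  then show False using assms(2)[of r] by simp
qed

lemma lead_coeff_higher_pderiv_pos: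
  fixes p :: "real poly"
  assumes "lead_coeff p > 0" "k \<le> degree p"
  shows "lead_coeff ((pderiv ^^ k) p) > 0"
proof -
  have "lead_coeff ((pderiv ^^ k) p)
        = pochhammer (of_nat (Suc (degree p - k))) k * lead_coeff p"
    using assms(2) by (simp add: degree_higher_pderiv coeff_higher_pderiv)
  then show ?thesis using assms(1) by (simp add: pochhammer_pos)
qed

lemma pderiv_power_dvd:
  fixes p q :: "'a :: idom poly"
  assumes "q ^ Suc m dvd p"
  shows "q ^ m dvd pderiv p"
proof -
  obtain w where w: "p = q ^ Suc m * w" using assms by (auto elim: dvdE)
  have "pderiv p = q ^ m * (q * pderiv w + w * smult (of_nat (Suc m)) (pderiv q))"
    unfolding w pderiv_mult pderiv_power_Suc by (simp add: algebra_simps power_Suc)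
  then show ?thesis by simp
qed

lemma higher_pderiv_power_dvd:
  fixes p q :: "'a :: idom poly"
  assumes "q ^ m dvd p" "k \<le> m"
  shows "q ^ (m - k) dvd (pderiv ^^ k) p"
  using assms(2)
proof (induction k)
  case 0
  then show ?case using assms(1) by simp
next
  case (Suc k)
  then have "q ^ Suc (m - Suc k) dvd (pderiv ^^ k) p" by (simp add: Suc_diff_Suc)
  then show ?case by (simp add: pderiv_power_dvd)
qed

lemma higher_pderiv_at_root:
  fixes w :: "'a :: {idom, semiring_char_0} poly"
  shows "poly ((pderiv ^^ m) ([:-a, 1:] ^ m * w)) a = fact m * poly w a"
proof (induction m arbitrary: w)
  case 0
  then show ?case by simp
next
  case (Suc m)
  define w' where "w' = smult (of_nat (Suc m)) w + [:-a, 1:] * pderiv w"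
  have "pderiv ([:-a, 1:] ^ Suc m * w) = [:-a, 1:] ^ m * w'"
    unfolding pderiv_mult pderiv_power_Suc w'_def by (simp add: pderiv_pCons algebra_simps power_Suc)
  then have "poly ((pderiv ^^ Suc m) ([:-a, 1:] ^ Suc m * w)) a = fact m * poly w' a"
    by (simp only: funpow_Suc_right o_apply Suc.IH)
  then show ?case by (simp add: w'_def)
qed

definition rodrigues :: "nat \<Rightarrow> nat \<Rightarrow> real poly" where
  "rodrigues n k = (pderiv ^^ k) ([:-1, 0, 1:] ^ n)"

lemma rodrigues_Suc: "rodrigues n (Suc k) = pderiv (rodrigues n k)"
  by (simp add: rodrigues_def)

lemma degree_rodrigues: "degree (rodrigues n k) = 2 * n - k"
  by (simp add: rodrigues_def degree_higher_pderiv degree_power_eq)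

lemma lead_coeff_rodrigues_pos: "k \<le> 2 * n \<Longrightarrow> lead_coeff (rodrigues n k) > 0"
proof -
  assume k: "k \<le> 2 * n"
  have "degree ([:-1, 0, 1:] ^ n :: real poly) = 2 * n" by (simp add: degree_power_eq)
  moreover have "lead_coeff ([:-1, 0, 1:] ^ n :: real poly) = 1"
    by (simp only: lead_coeff_power) simp
  ultimately show ?thesis
    unfolding rodrigues_def using k by (intro lead_coeff_higher_pderiv_pos) simp_all
qed

text \<open>Below order \<open>n\<close> the factor \<open>x\<^sup>2-1\<close> survives, so these derivatives vanish at \<open>\<plusminus>1\<close>.\<close>

lemma rodrigues_vanish_at_ends:
  assumes "k < n"
  shows "poly (rodrigues n k) 1 = 0" "poly (rodrigues n k) (-1) = 0"
proof -
  have "[:-1, 0, 1:] ^ (n - k) dvd rodrigues n k"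
    unfolding rodrigues_def using assms by (intro higher_pderiv_power_dvd) auto
  moreover have "[:-1, 0, 1:] dvd ([:-1, 0, 1:] :: real poly) ^ (n - k)"
    using assms by simp
  ultimately obtain r where "rodrigues n k = [:-1, 0, 1:] * r"
    by (meson dvd_trans dvdE)
  then show "poly (rodrigues n k) 1 = 0" "poly (rodrigues n k) (-1) = 0" by simp_all
qed

text \<open>Writing \<open>(x\<^sup>2-1)\<^sup>n = (x-1)\<^sup>n (x+1)\<^sup>n\<close> gives the value \<open>n! 2\<^sup>n\<close> at \<open>1\<close>, i.e. \<open>L\<^sub>n(1) = 1\<close>.\<close>

lemma rodrigues_at_one: "poly (rodrigues n n) 1 = fact n * 2 ^ n"
proof -
  have "[:-1, 0, 1:] ^ n = [:-1, 1:] ^ n * ([:1, 1:] ^ n :: real poly)"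
    by (simp flip: power_mult_distrib)
  then show ?thesis
    unfolding rodrigues_def by (simp add: higher_pderiv_at_root poly_power)
qed

text \<open>The \<open>k\<close>-th derivative (\<open>k \<le> n\<close>) has \<open>k\<close> distinct zeros in \<open>(-1,1)\<close>: apply Rolle to its
  predecessor's zeros together with \<open>\<plusminus>1\<close>.\<close>

lemma rodrigues_zeros_inside:
  "k \<le> n \<Longrightarrow> \<exists>S. finite S \<and> card S = k \<and> S \<subseteq> {-1<..<1}
                \<and> (\<forall>x\<in>S. poly (rodrigues n k) x = 0)"
proof (induction k)
  case 0
  then show ?case by (intro exI[of _ "{}"]) simp
next
  case (Suc k)
  then obtain S where S: "finite S" "card S = k" "S \<subseteq> {-1<..<1}"
      "\<forall>x\<in>S. poly (rodrigues n k) x = 0" by auto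
  define T where "T = insert (-1) (insert 1 S)"
  have out: "-1 \<notin> S" "1 \<notin> S" using S(3) by auto
  have T: "finite T" "T \<noteq> {}" "card T = Suc (Suc k)"
    using S out by (simp_all add: T_def)
  have "Min T = -1" by (rule Min_eqI) (use S(3) T(1) in \<open>auto simp: T_def\<close>)
  have "Max T = 1" by (rule Max_eqI) (use S(3) T(1) in \<open>auto simp: T_def\<close>)
  have "\<forall>x\<in>T. poly (rodrigues n k) x = 0"
    using S(4) rodrigues_vanish_at_ends[of k n] Suc.prems by (auto simp: T_def)
  then show ?case
    using poly_zeros_between[OF T(1,2), of "rodrigues n k"] T \<open>Min T = -1\<close> \<open>Max T = 1\<close>
    by (simp add: rodrigues_Suc)
qed

text \<open>Differentiating \<open>(x\<^sup>2-1) u' = 2nx u\<close> for \<open>u = (x\<^sup>2-1)\<^sup>n\<close> repeatedly yields the differential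
  equations satisfied by all derivatives of \<open>u\<close>; for \<open>k = n\<close> this is Legendre's equation.\<close>

lemma rodrigues_first_order:
  "[:-1, 0, 1:] * rodrigues n 1 = smult (2 * real n) ([:0, 1:] * rodrigues n 0)"
proof (cases n)
  case (Suc m)
  have "rodrigues n 1 = smult (of_nat (Suc m)) ([:-1, 0, 1:] ^ m) * [:0, 2:]"
    unfolding One_nat_def rodrigues_Suc unfolding rodrigues_def Suc funpow_0 pderiv_power_Suc
    by (simp add: pderiv_pCons)
  then show ?thesis
    by (intro poly_eq_poly_eq_iff[THEN iffD1] ext) (simp add: rodrigues_def Suc poly_power algebra_simps)
qed (simp add: rodrigues_def)

lemma rodrigues_ode:
  "[:-1, 0, 1:] * rodrigues n (k + 2) + smult (2 * (real k + 1 - real n)) ([:0, 1:] * rodrigues n (k + 1))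
     + smult ((real k + 1) * (real k - 2 * real n)) (rodrigues n k) = 0"
proof -
  define E where "E k = [:-1, 0, 1:] * rodrigues n (k + 2)
      + smult (2 * (real k + 1 - real n)) ([:0, 1:] * rodrigues n (k + 1))
      + smult ((real k + 1) * (real k - 2 * real n)) (rodrigues n k)" for k
  have E0: "E 0 = pderiv ([:-1, 0, 1:] * rodrigues n 1 - smult (2 * real n) ([:0, 1:] * rodrigues n 0))"
    unfolding E_def pderiv_diff pderiv_smult pderiv_mult
    by (intro poly_eq_poly_eq_iff[THEN iffD1] ext)
      (simp add: pderiv_pCons rodrigues_Suc[symmetric] numeral_2_eq_2 algebra_simps)
  have ESuc: "E (Suc k) = pderiv (E k)" for k
    unfolding E_def pderiv_add pderiv_smult pderiv_mult
    by (intro poly_eq_poly_eq_iff[THEN iffD1] ext)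
      (simp add: pderiv_pCons rodrigues_Suc[symmetric] numeral_2_eq_2 algebra_simps)
  have "E k = 0"
  proof (induction k)
    case 0
    show ?case by (simp only: E0 rodrigues_first_order diff_self pderiv_0)
  next
    case (Suc k)
    then show ?case by (simp only: ESuc pderiv_0)
  qed
  then show ?thesis unfolding E_def .
qed

definition Ldd :: "nat \<Rightarrow> real \<Rightarrow> real" where
  "Ldd n s = poly (pderiv (pderiv (legendre n))) s"

lemma legendre_rodrigues: "legendre n = smult (1 / (2 ^ n * fact n)) (rodrigues n n)"
  by (simp add: legendre_def rodrigues_def)

lemma L_rodrigues: "L n x = poly (rodrigues n n) x / (2 ^ n * fact n)"
  by (simp add: L_def legendre_rodrigues)

lemma Ld_rodrigues: "Ld n x = poly (rodrigues n (Suc n)) x / (2 ^ n * fact n)"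
  by (simp add: Ld_def legendre_rodrigues pderiv_smult rodrigues_Suc)

lemma Ldd_rodrigues: "Ldd n x = poly (rodrigues n (Suc (Suc n))) x / (2 ^ n * fact n)"
  by (simp add: Ldd_def legendre_rodrigues pderiv_smult rodrigues_Suc)

lemma L_has_derivative: "(L n has_real_derivative Ld n x) (at x)"
  unfolding L_def Ld_def by simp

lemma Ld_has_derivative: "(Ld n has_real_derivative Ldd n x) (at x)"
  unfolding Ld_def Ldd_def by simp

lemma legendre_ode:
  "(x\<^sup>2 - 1) * Ldd n x + 2 * x * Ld n x - real (n * (n + 1)) * L n x = 0"
proof -
  have "poly ([:-1, 0, 1:] * rodrigues n (n + 2) + smult (2 * (real n + 1 - real n)) ([:0, 1:] * rodrigues n (n + 1))
     + smult ((real n + 1) * (real n - 2 * real n)) (rodrigues n n)) x = 0"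
    by (simp only: rodrigues_ode poly_0)
  then have "(x\<^sup>2 - 1) * poly (rodrigues n (Suc (Suc n))) x + 2 * x * poly (rodrigues n (Suc n)) x
      - real (n * (n + 1)) * poly (rodrigues n n) x = 0"
    by (simp add: algebra_simps power2_eq_square)
  then show ?thesis
    unfolding L_rodrigues Ld_rodrigues Ldd_rodrigues by (simp add: field_simps)
qed

lemma legendre_at_one: "L n 1 = 1"
  by (simp add: L_rodrigues rodrigues_at_one)

lemma rodrigues_zero_set:
  "{x. poly (rodrigues n n) x = 0} \<subseteq> {-1<..<1}"
  "card {x. poly (rodrigues n n) x = 0} = n"
proof -
  obtain S where S: "finite S" "card S = n" "S \<subseteq> {-1<..<1}" "\<forall>x\<in>S. poly (rodrigues n n) x = 0"
    using rodrigues_zeros_inside[of n n] by auto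
  have "rodrigues n n \<noteq> 0" using lead_coeff_rodrigues_pos[of n n] by auto
  then have "{x. poly (rodrigues n n) x = 0} = S"
    using S by (intro poly_zeros_eq_of_card) (auto simp: degree_rodrigues)
  then show "{x. poly (rodrigues n n) x = 0} \<subseteq> {-1<..<1}" "card {x. poly (rodrigues n n) x = 0} = n"
    using S by auto
qed

lemma rodrigues_zeros_below:
  assumes largest: "\<forall>y. -1 < y \<and> y < 1 \<and> L n y = 0 \<longrightarrow> y \<le> z"
  shows "poly (rodrigues n n) x = 0 \<Longrightarrow> x \<le> z"
    and "n \<ge> 1 \<Longrightarrow> poly (rodrigues n (Suc n)) x = 0 \<Longrightarrow> x < z"
    and "n \<ge> 2 \<Longrightarrow> poly (rodrigues n (Suc (Suc n))) x = 0 \<Longrightarrow> x < z"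
proof -
  show le: "x \<le> z" if "poly (rodrigues n n) x = 0" for x
    using largest rodrigues_zero_set(1)[of n] that by (auto simp: L_rodrigues)
  have deriv: "card {x. poly (rodrigues n (Suc n)) x = 0} = degree (rodrigues n (Suc n))"
      "poly (rodrigues n (Suc n)) x = 0 \<Longrightarrow> x < z" if "n \<ge> 1" for x
    using pderiv_zeros_below[of "rodrigues n n" z] le rodrigues_zero_set(2)[of n] that
    by (auto simp: degree_rodrigues rodrigues_Suc)
  then show "n \<ge> 1 \<Longrightarrow> poly (rodrigues n (Suc n)) x = 0 \<Longrightarrow> x < z" by blast
  show "x < z" if "n \<ge> 2" "poly (rodrigues n (Suc (Suc n))) x = 0"
  proof -
    have "n \<ge> 1" "1 \<le> degree (rodrigues n (Suc n))" using that(1) by (simp_all add: degree_rodrigues)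
    moreover have "\<And>y. poly (rodrigues n (Suc n)) y = 0 \<Longrightarrow> y \<le> z"
      using deriv(2) \<open>n \<ge> 1\<close> by (simp add: less_imp_le)
    ultimately show ?thesis
      using pderiv_zeros_below(2)[OF deriv(1)] that(2) by (simp add: rodrigues_Suc)
  qed
qed

lemma legendre_positivity:
  assumes "\<forall>y. -1 < y \<and> y < 1 \<and> L n y = 0 \<longrightarrow> y \<le> z"
  shows "z < x \<Longrightarrow> L n x > 0"
    and "n \<ge> 1 \<Longrightarrow> z \<le> x \<Longrightarrow> Ld n x > 0"
    and "n \<ge> 2 \<Longrightarrow> z \<le> x \<Longrightarrow> Ldd n x > 0"
proof -
  have pos: "poly (rodrigues n k) x > 0"
    if "k \<le> 2 * n" "\<And>y. x \<le> y \<Longrightarrow> poly (rodrigues n k) y \<noteq> 0" for k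
    using poly_pos_right_of_zeros lead_coeff_rodrigues_pos that by blast
  show "z < x \<Longrightarrow> L n x > 0"
    using pos[of n] rodrigues_zeros_below(1)[OF assms] by (force simp: L_rodrigues)
  show "n \<ge> 1 \<Longrightarrow> z \<le> x \<Longrightarrow> Ld n x > 0"
    using pos[of "Suc n"] rodrigues_zeros_below(2)[OF assms] by (force simp: Ld_rodrigues)
  show "n \<ge> 2 \<Longrightarrow> z \<le> x \<Longrightarrow> Ldd n x > 0"
    using pos[of "Suc (Suc n)"] rodrigues_zeros_below(3)[OF assms] by (force simp: Ldd_rodrigues)
qed

text \<open>\<open>(1+x) L\<^sub>n' - p L\<^sub>n > 0\<close> on any interval \<open>[x,1)\<close> where \<open>L\<^sub>n' > 0\<close>: the function
  \<open>(1-t)((1+t) L\<^sub>n' - p L\<^sub>n)\<close> has derivative \<open>-p(1-t) L\<^sub>n'\<close> and vanishes at \<open>1\<close>.\<close>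

lemma legendre_boundary_pos:
  assumes "n \<ge> 1" "x < 1" and Ld_pos: "\<And>t. x < t \<Longrightarrow> t < 1 \<Longrightarrow> Ld n t > 0"
  shows "(1 + x) * Ld n x - real (n * (n + 1)) * L n x > 0"
proof -
  define P where "P = real (n * (n + 1))"
  have "P > 0" using \<open>n \<ge> 1\<close> unfolding P_def by (simp del: of_nat_mult)
  define F where "F t = (1 - t) * ((1 + t) * Ld n t - P * L n t)" for t
  have F_deriv: "(F has_real_derivative - P * (1 - t) * Ld n t) (at t)" for t
  proof -
    have "(F has_real_derivative
        - ((1 + t) * Ld n t - P * L n t) + (1 - t) * (Ld n t + (1 + t) * Ldd n t - P * Ld n t)) (at t)"
      unfolding F_def by (auto intro!: derivative_eq_intros L_has_derivative Ld_has_derivative)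
    moreover have "- ((1 + t) * Ld n t - P * L n t) + (1 - t) * (Ld n t + (1 + t) * Ldd n t - P * Ld n t)
        = - P * (1 - t) * Ld n t"
      using legendre_ode[of t n] unfolding P_def[symmetric] by (simp add: algebra_simps power2_eq_square)
    ultimately show ?thesis by simp
  qed
  have "F 1 < F x"
  proof (rule DERIV_neg_imp_decreasing_open[OF \<open>x < 1\<close>])
    show "\<exists>y. (F has_real_derivative y) (at t) \<and> y < 0" if "x < t" "t < 1" for t
      using F_deriv[of t] Ld_pos[OF that] that by (intro exI[of _ "- P * (1 - t) * Ld n t"])
        (simp add: \<open>P > 0\<close>)
    show "continuous_on {x..1} F"
      using F_deriv by (intro DERIV_atLeastAtMost_imp_continuous_on) blast
  qed
  then show ?thesis using \<open>x < 1\<close> by (simp add: F_def P_def zero_less_mult_iff)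
qed

definition acoef_den :: "nat \<Rightarrow> nat \<Rightarrow> real \<Rightarrow> real" where
  "acoef_den p n x = (1 - x) * Ld n x + real p * L n x"

definition acoef_closed :: "nat \<Rightarrow> nat \<Rightarrow> real \<Rightarrow> real" where
  "acoef_closed p n x = real p * ((1 + x) / 2) ^ (p - 1) / acoef_den p n x"

lemma beta_factor:
  assumes "p \<ge> 1"
  shows "beta p n x = (1 + x) ^ (p - 1) * ((1 + x) * Ld n x - real p * L n x)
                      / ((1 - x) ^ (p - 1) * acoef_den p n x)"
proof -
  obtain m where p: "p = Suc m" using assms by (cases p) auto
  show ?thesis unfolding beta_def acoef_den_def p by (simp add: algebra_simps)
qed

lemma beta_times_power:
  assumes "p \<ge> 1" "x \<noteq> 1"
  shows "beta p n x * ((1 - x) / 2) ^ (p - 1)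
         = ((1 + x) / 2) ^ (p - 1) * ((1 + x) * Ld n x - real p * L n x) / acoef_den p n x"
  using assms by (simp add: beta_factor power_divide)

text \<open>Since \<open>D + (1+x) L\<^sub>n' - p L\<^sub>n = 2 L\<^sub>n'\<close>, the coefficient \<open>a\<close> equals its closed form.\<close>

lemma acoef_eq_closed:
  assumes "p \<ge> 1" "x \<noteq> 1" "Ld n x \<noteq> 0" "acoef_den p n x \<noteq> 0"
  shows "acoef p n x = acoef_closed p n x"
proof -
  have sum: "acoef_den p n x + ((1 + x) * Ld n x - real p * L n x) = 2 * Ld n x"
    by (simp add: acoef_den_def algebra_simps)
  have "acoef p n x = real p / 2 * ((1 + x) / 2) ^ (p - 1)
          * (acoef_den p n x + ((1 + x) * Ld n x - real p * L n x)) / (acoef_den p n x * Ld n x)"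
    unfolding acoef_def beta_times_power[OF assms(1,2)] using assms(3,4)
    by (simp add: field_simps)
  also have "\<dots> = acoef_closed p n x"
    unfolding sum acoef_closed_def using assms(3) by simp
  finally show ?thesis .
qed

lemma hc_tangent:
  assumes "p \<ge> 1" "x \<noteq> 1" "Ld n x \<noteq> 0" "acoef_den p n x \<noteq> 0" "beta p n x \<ge> 0"
  shows "hc p (root p (beta p n x)) x = acoef p n x * L n x"
    and "(hc p (root p (beta p n x)) has_real_derivative acoef p n x * Ld n x) (at x)"
proof -
  have root_pow: "root p (beta p n x) ^ p = beta p n x" using assms(1,5) by simp
  define h where "h = (1 + x) / 2"
  define k where "k = (1 - x) / 2"
  define G where "G = (1 + x) * Ld n x - real p * L n x"
  have pow_split: "y ^ p = y * y ^ (p - 1)" for y :: real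
    using assms(1) by (simp add: power_eq_if)
  have "hc p (root p (beta p n x)) x = h * h ^ (p - 1) - k * (beta p n x * k ^ (p - 1))"
    unfolding hc_def root_pow h_def[symmetric] k_def[symmetric] pow_split[of h] pow_split[of k]
    by (simp add: algebra_simps)
  also have "\<dots> = h ^ (p - 1) * (h * acoef_den p n x - k * G) / acoef_den p n x"
    unfolding k_def beta_times_power[OF assms(1,2)] using assms(4)
    by (simp add: h_def G_def field_simps)
  also have "h * acoef_den p n x - k * G = real p * L n x"
    by (simp add: h_def k_def G_def acoef_den_def field_simps)
  finally have "hc p (root p (beta p n x)) x = acoef_closed p n x * L n x"
    by (simp add: acoef_closed_def h_def)
  then show "hc p (root p (beta p n x)) x = acoef p n x * L n x"
    using acoef_eq_closed[OF assms(1-4)] by simp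
  have "(hc p (root p (beta p n x)) has_real_derivative
        real p * ((1 + x) / 2) ^ (p - 1) / 2 + beta p n x * (real p * ((1 - x) / 2) ^ (p - 1) / 2)) (at x)"
    unfolding hc_def root_pow by (auto intro!: derivative_eq_intros)
  moreover have "acoef p n x * Ld n x
      = real p * ((1 + x) / 2) ^ (p - 1) / 2 + beta p n x * (real p * ((1 - x) / 2) ^ (p - 1) / 2)"
    using assms(3) unfolding acoef_def by (simp add: field_simps)
  ultimately show "(hc p (root p (beta p n x)) has_real_derivative acoef p n x * Ld n x) (at x)"
    by (simp only:)
qed

lemma acoef_den_has_derivative:
  "(acoef_den p n has_real_derivative (real p - 1) * Ld n w + (1 - w) * Ldd n w) (at w)"
proof -
  have "(acoef_den p n has_real_derivative - Ld n w + (1 - w) * Ldd n w + real p * Ld n w) (at w)"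
    unfolding acoef_den_def[abs_def]
    by (auto intro!: derivative_eq_intros L_has_derivative Ld_has_derivative)
  then show ?thesis by (simp add: algebra_simps)
qed

text \<open>Legendre's equation turns the numerator of the derivative of the closed form into a
  multiple of \<open>L\<^sub>n''\<close>.\<close>

lemma acoef_den_deriv_identity:
  assumes "p = n * (n + 1)"
  shows "(real p - 1) * acoef_den p n w - (1 + w) * ((real p - 1) * Ld n w + (1 - w) * Ldd n w)
         = - real p * (1 - w\<^sup>2) * Ldd n w"
proof -
  have ode: "(1 - w\<^sup>2) * Ldd n w = 2 * w * Ld n w - real p * L n w"
    using legendre_ode[of w n] unfolding assms[symmetric] by (simp add: algebra_simps)
  have "(real p - 1) * acoef_den p n w - (1 + w) * ((real p - 1) * Ld n w + (1 - w) * Ldd n w)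
      = (real p - 1) * real p * L n w - 2 * w * (real p - 1) * Ld n w - (1 - w\<^sup>2) * Ldd n w"
    by (simp add: acoef_den_def algebra_simps power2_eq_square)
  also have "\<dots> = - real p * (2 * w * Ld n w - real p * L n w)"
    unfolding ode by (simp add: algebra_simps)
  also have "\<dots> = - real p * (1 - w\<^sup>2) * Ldd n w"
    by (simp only: ode mult.assoc)
  finally show ?thesis .
qed

lemma acoef_closed_deriv_neg:
  assumes p: "p = n * (n + 1)" and "n \<ge> 1" "-1 < w" "w < 1"
    and den_pos: "acoef_den p n w > 0" and Ldd_pos: "Ldd n w > 0"
  shows "\<exists>D. (acoef_closed p n has_real_derivative D) (at w) \<and> D < 0"
proof -
  define P where "P = real p"
  define m where "m = p - 1"
  define h where "h = (1 + w) / 2"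
  define Den where "Den = acoef_den p n w"
  define Den' where "Den' = (real p - 1) * Ld n w + (1 - w) * Ldd n w"
  have "p \<ge> 2" using mult_le_mono[of 1 n 2 "n + 1"] \<open>n \<ge> 1\<close> unfolding p by simp
  then have m: "real m = P - 1" "h ^ m = h * h ^ (m - 1)"
    by (simp_all add: m_def P_def of_nat_diff power_eq_if)
  have N_deriv: "((\<lambda>w. P * ((1 + w) / 2) ^ m) has_real_derivative P * (real m * h ^ (m - 1) / 2)) (at w)"
    unfolding h_def by (auto intro!: derivative_eq_intros)
  have "(acoef_closed p n has_real_derivative
          (P * (real m * h ^ (m - 1) / 2) * Den - P * h ^ m * Den') / (Den * Den)) (at w)"
    using DERIV_divide[OF N_deriv acoef_den_has_derivative[of p n w]] den_pos
    unfolding acoef_closed_def[abs_def] Den_def Den'_def h_def m_def P_def by simp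
  moreover have "P * (real m * h ^ (m - 1) / 2) * Den - P * h ^ m * Den'
      = P * h ^ (m - 1) / 2 * ((P - 1) * Den - (1 + w) * Den')"
    unfolding m by (simp add: h_def field_simps)
  moreover have "(P - 1) * Den - (1 + w) * Den' = - P * (1 - w\<^sup>2) * Ldd n w"
    using acoef_den_deriv_identity[OF p] unfolding Den_def Den'_def P_def .
  moreover have "P * h ^ (m - 1) / 2 * (P * (1 - w\<^sup>2) * Ldd n w) > 0"
    using \<open>p \<ge> 2\<close> assms(3,4) Ldd_pos by (simp add: P_def h_def abs_square_less_1)
  ultimately show ?thesis
    using den_pos unfolding Den_def[symmetric]
    by (intro exI[of _ "(P * (real m * h ^ (m - 1) / 2) * Den - P * h ^ m * Den') / (Den * Den)"])
      (simp add: divide_neg_pos)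
qed

lemma acoef_closed_tendsto_one:
  assumes "p \<ge> 1"
  shows "(acoef_closed p n \<longlongrightarrow> 1) (at 1)"
proof -
  have "acoef_den p n 1 = real p" by (simp add: acoef_den_def legendre_at_one)
  moreover have "isCont (acoef_den p n) 1"
    using acoef_den_has_derivative by (rule DERIV_isCont)
  ultimately have "isCont (acoef_closed p n) 1"
    using assms unfolding acoef_closed_def[abs_def] by (intro continuous_intros) auto
  moreover have "acoef_closed p n 1 = 1"
    using assms \<open>acoef_den p n 1 = real p\<close> by (simp add: acoef_closed_def)
  ultimately show ?thesis by (simp add: isCont_def)
qed

lemma legendre_right_of_largest_zero:
  assumes n2: "n \<ge> 2" and z_zero: "L n z = 0" and "-1 < z"
    and z_largest: "\<forall>y. -1 < y \<and> y < 1 \<and> L n y = 0 \<longrightarrow> y \<le> z"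
    and x: "z \<le> x" "x < 1"
  shows "Ld n x > 0" "Ldd n x > 0" "acoef_den (n * (n + 1)) n x > 0"
    and "beta (n * (n + 1)) n x \<ge> 0"
proof -
  show Ld_pos: "Ld n x > 0" and "Ldd n x > 0"
    using legendre_positivity(2,3)[OF z_largest] n2 x by auto
  have "L n x \<ge> 0"
    using legendre_positivity(1)[OF z_largest, of x] z_zero x by (cases "x = z") auto
  then show den_pos: "acoef_den (n * (n + 1)) n x > 0"
    using Ld_pos x by (simp add: acoef_den_def add_pos_nonneg)
  have "(1 + x) * Ld n x - real (n * (n + 1)) * L n x > 0"
    using legendre_boundary_pos[of n x] legendre_positivity(2)[OF z_largest] n2 x by force
  then show "beta (n * (n + 1)) n x \<ge> 0"
    using den_pos x \<open>-1 < z\<close> n2 by (simp add: beta_factor)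
qed

theorem lemma5p4:
  fixes n :: nat and z :: real
  assumes n2: "n \<ge> 2"
    and z_zero: "L n z = 0" and z_range: "-1 < z \<and> z < 1"
    and z_largest: "\<forall>y. -1 < y \<and> y < 1 \<and> L n y = 0 \<longrightarrow> y \<le> z"
  shows "(\<forall>x y. z \<le> x \<and> x < y \<and> y < 1 \<longrightarrow>
            acoef (n * (n + 1)) n y < acoef (n * (n + 1)) n x)
       \<and> (\<forall>x. z \<le> x \<and> x < 1 \<longrightarrow>
            acoef (n * (n + 1)) n x * L n x
              = hc (n * (n + 1)) (root (n * (n + 1)) (beta (n * (n + 1)) n x)) x
          \<and> (hc (n * (n + 1)) (root (n * (n + 1)) (beta (n * (n + 1)) n x))
               has_real_derivative (acoef (n * (n + 1)) n x * Ld n x)) (at x))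
       \<and> (acoef (n * (n + 1)) n \<longlongrightarrow> 1) (at_left 1)"
proof -
  define p where "p = n * (n + 1)"
  have "p \<ge> 1" using n2 by (simp add: p_def)
  note signs = legendre_right_of_largest_zero[OF n2 z_zero conjunct1[OF z_range] z_largest,
      folded p_def]
  have closed: "acoef p n x = acoef_closed p n x" if "z \<le> x" "x < 1" for x
    using acoef_eq_closed[OF \<open>p \<ge> 1\<close>] signs[OF that] that by simp
  have decreasing: "acoef p n y < acoef p n x" if "z \<le> x" "x < y" "y < 1" for x y
  proof -
    have "acoef_closed p n y < acoef_closed p n x"
      using that z_range n2 signs acoef_closed_deriv_neg[OF p_def]
      by (intro DERIV_neg_imp_decreasing[OF \<open>x < y\<close>]) force
    then show ?thesis using closed that by simp
  qed
  have tangent: "acoef p n x * L n x = hc p (root p (beta p n x)) x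
      \<and> (hc p (root p (beta p n x)) has_real_derivative acoef p n x * Ld n x) (at x)"
    if "z \<le> x" "x < 1" for x
    using hc_tangent[OF \<open>p \<ge> 1\<close>] signs[OF that] that by simp
  have "(acoef_closed p n \<longlongrightarrow> 1) (at_left 1)"
    using acoef_closed_tendsto_one[OF \<open>p \<ge> 1\<close>] by (rule filterlim_mono) (simp_all add: at_le)
  moreover have "eventually (\<lambda>x. acoef_closed p n x = acoef p n x) (at_left 1)"
    using eventually_at_left_real[of z 1] z_range closed
    by (auto elim!: eventually_mono)
  ultimately have "(acoef p n \<longlongrightarrow> 1) (at_left 1)" by (rule Lim_transform_eventually)
  with decreasing tangent show ?thesis unfolding p_def by blast
qed

end
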